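(* For any type $\sigma$, there are countably many regular families of $\sigma$-forests.
   Context: A type $\sigma$ is a finite set of relation symbols with arities; a $\sigma$-structure is a finite set with an $r$-ary relation for each symbol of arity $r$. $\mathrm{Inc}(\mathbf A)$ is the bipartite multigraph with parts $V(\mathbf A)$ and the blocks $(R,(x_1,\dots,x_r))$, $(x_1,\dots,x_r)\in R(\mathbf A)$, with one edge joining $x_i$ to the block for each $i$; $\mathbf A$ is a $\sigma$-forest if $\mathrm{Inc}(\mathbf A)$ has no cycles or parallel edges. $\mathbb F$ is the set of isomorphism classes of $\sigma$-forests, $\mathbb F_{\mathrm r}$ that of rooted $\sigma$-forests $(\mathbf A,a)$. $(\mathbf A,a)+(\mathbf B,b)$: disjoint union with $a,b$ identified as new root; $[(\mathbf A,a)]$ forgets the root. A family $\mathcal O\subseteq\mathbb F$ is regular if there are only finitely many distinct sets $\mathcal O-(\mathbf A,a)=\{(\mathbf B,b)\in\mathbb F_{\mathrm r}:[(\mathbf A,a)+(\mathbf B,b)]\in\mathcal O\}$, $(\mathbf A,a)\in\mathbb F_{\mathrm r}$. *)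

theory Defs
  imports Main "HOL-Library.Countable_Set"
begin

text \<open>A type sigma is given by a finite type 'r of relation symbols together with an
arity function ar :: 'r => nat.  A sigma-structure is represented concretely by a
universe (a finite set of natural numbers) and, for each symbol R, a set of tuples
(lists of length ar R) over the universe.  Isomorphism classes are handled by working
with isomorphism-closed sets of concrete structures.\<close>

type_synonym 'r struc = "nat set \<times> ('r \<Rightarrow> nat list set)"

definition is_struc :: "('r \<Rightarrow> nat) \<Rightarrow> 'r struc \<Rightarrow> bool" where
  "is_struc ar A \<longleftrightarrow> finite (fst A) \<and>
     (\<forall>R. \<forall>t\<in>snd A R. length t = ar R \<and> set t \<subseteq> fst A)"

definition blocks :: "'r struc \<Rightarrow> ('r \<times> nat list) set" where
  "blocks A = {(R, t). t \<in> snd A R}"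

text \<open>Inc(A) has parallel edges iff some block contains a repeated vertex.\<close>
definition no_parallel :: "'r struc \<Rightarrow> bool" where
  "no_parallel A \<longleftrightarrow> (\<forall>b\<in>blocks A. distinct (snd b))"

text \<open>A cycle in the bipartite graph Inc(A) (without parallel edges): distinct vertices
v_0..v_(k-1), k >= 2, and distinct blocks b_0..b_(k-1) such that b_i contains v_i and
v_(i+1 mod k).\<close>
definition has_cycle :: "'r struc \<Rightarrow> bool" where
  "has_cycle A \<longleftrightarrow> (\<exists>vs bs. length vs = length bs \<and> 2 \<le> length vs \<and>
      distinct vs \<and> distinct bs \<and> set bs \<subseteq> blocks A \<and>
      (\<forall>i<length vs. vs ! i \<in> set (snd (bs ! i)) \<and>
                     vs ! ((i + 1) mod length vs) \<in> set (snd (bs ! i))))"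

definition is_forest :: "('r \<Rightarrow> nat) \<Rightarrow> 'r struc \<Rightarrow> bool" where
  "is_forest ar A \<longleftrightarrow> is_struc ar A \<and> no_parallel A \<and> \<not> has_cycle A"

definition rooted_forest :: "('r \<Rightarrow> nat) \<Rightarrow> 'r struc \<Rightarrow> nat \<Rightarrow> bool" where
  "rooted_forest ar A a \<longleftrightarrow> is_forest ar A \<and> a \<in> fst A"

definition struc_iso :: "'r struc \<Rightarrow> 'r struc \<Rightarrow> bool" where
  "struc_iso A B \<longleftrightarrow> (\<exists>f. bij_betw f (fst A) (fst B) \<and> (\<forall>R. snd B R = map f ` snd A R))"

text \<open>(A,a) + (B,b): disjoint union with a and b identified; the root is forgotten
(only the underlying structure is returned, i.e. [(A,a)+(B,b)]).\<close>
definition glue :: "'r struc \<Rightarrow> nat \<Rightarrow> 'r struc \<Rightarrow> nat \<Rightarrow> 'r struc" where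
  "glue A a B b =
    (let fA = (\<lambda>x. 2 * x); fB = (\<lambda>y. if y = b then 2 * a else 2 * y + 1)
     in (fA ` fst A \<union> fB ` fst B, \<lambda>R. map fA ` snd A R \<union> map fB ` snd B R))"

definition forest_family :: "('r \<Rightarrow> nat) \<Rightarrow> 'r struc set \<Rightarrow> bool" where
  "forest_family ar F \<longleftrightarrow> F \<subseteq> {A. is_forest ar A} \<and>
     (\<forall>A B. A \<in> F \<longrightarrow> struc_iso A B \<longrightarrow> B \<in> F)"

definition residual :: "('r \<Rightarrow> nat) \<Rightarrow> 'r struc set \<Rightarrow> 'r struc \<Rightarrow> nat \<Rightarrow> ('r struc \<times> nat) set" where
  "residual ar F A a = {(B, b). rooted_forest ar B b \<and> glue A a B b \<in> F}"

definition regular_family :: "('r \<Rightarrow> nat) \<Rightarrow> 'r struc set \<Rightarrow> bool" where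
  "regular_family ar F \<longleftrightarrow>
     finite ((\<lambda>(A, a). residual ar F A a) ` {(A, a). rooted_forest ar A a})"

end

theory Submission
  imports Defs
begin

text \<open>Every rooted forest is, up to renaming, an assembly of strictly smaller rooted forests along
  one of finitely many skeletons: a lone root with nullary facts, a root split off from the rest,
  or a block through the root with one piece hanging at each of its positions. The residual of an
  assembly depends only on the residuals of its pieces, so for a regular family the finitely many
  residual classes, numbered by labels, obey a finite transition table. By induction on size, this
  table together with the accepted labels and the members with empty universe determines the
  family, and such finite data range over a countable set.\<close>

section \<open>Operations on structures\<close>

definition map_struc :: "(nat \<Rightarrow> nat) \<Rightarrow> 'r struc \<Rightarrow> 'r struc" where
  "map_struc f A = (f ` fst A, \<lambda>R. map f ` snd A R)"

definition union_struc :: "'r struc \<Rightarrow> 'r struc \<Rightarrow> 'r struc" where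
  "union_struc A B = (fst A \<union> fst B, \<lambda>R. snd A R \<union> snd B R)"

definition Union_struc :: "'i set \<Rightarrow> ('i \<Rightarrow> 'r struc) \<Rightarrow> 'r struc" where
  "Union_struc I A = (\<Union>j\<in>I. fst (A j), \<lambda>R. \<Union>j\<in>I. snd (A j) R)"

definition restrict_struc :: "'r struc \<Rightarrow> nat set \<Rightarrow> 'r struc" where
  "restrict_struc A K = (K, \<lambda>R. {t \<in> snd A R. set t \<subseteq> K})"

definition nullary_struc :: "nat set \<Rightarrow> 'r set \<Rightarrow> 'r struc" where
  "nullary_struc V N = (V, \<lambda>R. if R \<in> N then {[]} else {})"

definition tuple_struc :: "'r \<Rightarrow> nat list \<Rightarrow> 'r struc" where
  "tuple_struc R t = (set t, \<lambda>S. if S = R then {t} else {})"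

definition closed_struc :: "'r struc \<Rightarrow> bool" where
  "closed_struc A \<longleftrightarrow> (\<forall>R. \<forall>t\<in>snd A R. set t \<subseteq> fst A)"

lemma fst_map_struc [simp]: "fst (map_struc f A) = f ` fst A"
  and snd_map_struc [simp]: "snd (map_struc f A) R = map f ` snd A R"
  by (simp_all add: map_struc_def)

lemma fst_union_struc [simp]: "fst (union_struc A B) = fst A \<union> fst B"
  and snd_union_struc [simp]: "snd (union_struc A B) R = snd A R \<union> snd B R"
  by (simp_all add: union_struc_def)

lemma fst_Union_struc [simp]: "fst (Union_struc I A) = (\<Union>j\<in>I. fst (A j))"
  and snd_Union_struc [simp]: "snd (Union_struc I A) R = (\<Union>j\<in>I. snd (A j) R)"
  by (simp_all add: Union_struc_def)

lemma fst_restrict_struc [simp]: "fst (restrict_struc A K) = K"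
  and snd_restrict_struc [simp]: "snd (restrict_struc A K) R = {t \<in> snd A R. set t \<subseteq> K}"
  by (simp_all add: restrict_struc_def)

lemma fst_nullary_struc [simp]: "fst (nullary_struc V N) = V"
  and snd_nullary_struc [simp]: "snd (nullary_struc V N) R = (if R \<in> N then {[]} else {})"
  by (simp_all add: nullary_struc_def)

lemma fst_tuple_struc [simp]: "fst (tuple_struc R t) = set t"
  and snd_tuple_struc [simp]: "snd (tuple_struc R t) S = (if S = R then {t} else {})"
  by (simp_all add: tuple_struc_def)

lemma struc_eqI: "fst A = fst B \<Longrightarrow> (\<And>R. snd A R = snd B R) \<Longrightarrow> A = B"
  by (cases A; cases B) auto

lemma map_struc_comp: "map_struc f (map_struc g A) = map_struc (f \<circ> g) A"
  by (rule struc_eqI) (auto simp: image_image)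

lemma map_struc_ident: "map_struc (\<lambda>x. x) A = A"
  by (rule struc_eqI) auto

lemma map_struc_union_struc:
  "map_struc f (union_struc A B) = union_struc (map_struc f A) (map_struc f B)"
  by (rule struc_eqI) auto

lemma map_struc_tuple_struc: "map_struc f (tuple_struc R t) = tuple_struc R (map f t)"
  by (rule struc_eqI) auto

lemma map_struc_cong:
  assumes "closed_struc A" and "\<And>x. x \<in> fst A \<Longrightarrow> f x = g x"
  shows "map_struc f A = map_struc g A"
proof (rule struc_eqI)
  fix R
  have "map f t = map g t" if "t \<in> snd A R" for t
    using that assms unfolding closed_struc_def by (intro map_cong) auto
  then show "snd (map_struc f A) R = snd (map_struc g A) R"
    unfolding snd_map_struc by (rule image_cong[OF refl])
qed (use assms in simp)

lemma is_struc_closed_struc: "is_struc ar A \<Longrightarrow> closed_struc A"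
  by (auto simp: is_struc_def closed_struc_def)

lemma is_struc_map_struc: "is_struc ar A \<Longrightarrow> is_struc ar (map_struc f A)"
  by (auto simp: is_struc_def)

lemma is_struc_union_struc: "is_struc ar A \<Longrightarrow> is_struc ar B \<Longrightarrow> is_struc ar (union_struc A B)"
  unfolding is_struc_def by fastforce

lemma is_struc_Union_struc:
  "finite I \<Longrightarrow> (\<And>j. j \<in> I \<Longrightarrow> is_struc ar (A j)) \<Longrightarrow> is_struc ar (Union_struc I A)"
  unfolding is_struc_def by fastforce

lemma is_struc_restrict_struc: "is_struc ar A \<Longrightarrow> K \<subseteq> fst A \<Longrightarrow> is_struc ar (restrict_struc A K)"
  unfolding is_struc_def by (auto intro: finite_subset)

lemma is_struc_nullary_struc:
  "finite V \<Longrightarrow> (\<And>R. R \<in> N \<Longrightarrow> ar R = 0) \<Longrightarrow> is_struc ar (nullary_struc V N)"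
  by (simp add: is_struc_def)

lemma is_struc_tuple_struc: "length t = ar R \<Longrightarrow> is_struc ar (tuple_struc R t)"
  by (simp add: is_struc_def)

lemma rooted_forest_is_struc: "rooted_forest ar A a \<Longrightarrow> is_struc ar A"
  by (simp add: rooted_forest_def is_forest_def)

lemma rooted_forest_closed_struc: "rooted_forest ar A a \<Longrightarrow> closed_struc A"
  by (rule is_struc_closed_struc[OF rooted_forest_is_struc])

lemma rooted_forest_root: "rooted_forest ar A a \<Longrightarrow> a \<in> fst A"
  by (simp add: rooted_forest_def)

lemma struc_iso_map_struc: "inj_on \<theta> (fst A) \<Longrightarrow> struc_iso A (map_struc \<theta> A)"
  unfolding struc_iso_def by (auto intro!: exI[of _ \<theta>] inj_on_imp_bij_betw)

section \<open>Gluing and residuals\<close>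

definition gluing_maps ::
  "(nat \<Rightarrow> nat) \<Rightarrow> 'r struc \<Rightarrow> nat \<Rightarrow> (nat \<Rightarrow> nat) \<Rightarrow> 'r struc \<Rightarrow> nat \<Rightarrow> bool" where
  "gluing_maps f A a g B b \<longleftrightarrow> inj_on f (fst A) \<and> inj_on g (fst B) \<and>
     f ` fst A \<inter> g ` fst B = {f a} \<and> g b = f a"

lemma glue_eq_union_struc:
  "glue A a B b = union_struc (map_struc (\<lambda>x. 2 * x) A)
                    (map_struc (\<lambda>y. if y = b then 2 * a else 2 * y + 1) B)"
  by (simp add: glue_def union_struc_def map_struc_def Let_def)

lemma gluing_maps_glue:
  assumes \<theta>: "inj_on \<theta> (fst A)" and a: "a \<in> fst A" and b: "b \<in> fst B"
  shows "gluing_maps ((\<lambda>x. 2 * x) \<circ> \<theta>) A a (\<lambda>y. if y = b then 2 * \<theta> a else 2 * y + 1) B b"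
proof -
  have odd: "2 * x \<noteq> Suc (2 * y)" "Suc (2 * y) \<noteq> 2 * x" for x y :: nat by presburger+
  have "inj_on (\<lambda>y. if y = b then 2 * \<theta> a else 2 * y + 1) (fst B)"
    using odd by (auto simp: inj_on_def)
  moreover have "((\<lambda>x. 2 * x) \<circ> \<theta>) ` fst A \<inter> (\<lambda>y. if y = b then 2 * \<theta> a else 2 * y + 1) ` fst B
      = {2 * \<theta> a}" (is "?I = _")
  proof
    show "?I \<subseteq> {2 * \<theta> a}"
      using odd by (auto split: if_splits)
    show "{2 * \<theta> a} \<subseteq> ?I"
      using a b by (auto intro!: image_eqI[of _ _ b])
  qed
  ultimately show ?thesis
    using \<theta> by (auto simp: gluing_maps_def inj_on_def)
qed

lemma gluing_maps_transfer:
  assumes a: "a \<in> fst A" and b: "b \<in> fst B"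
    and g1: "gluing_maps f1 A a g1 B b" and g2: "gluing_maps f2 A a g2 B b"
  obtains \<theta> where "\<And>x. x \<in> fst A \<Longrightarrow> \<theta> (f1 x) = f2 x" "\<And>y. y \<in> fst B \<Longrightarrow> \<theta> (g1 y) = g2 y"
proof
  define \<theta> where "\<theta> z = (if z \<in> f1 ` fst A then f2 (inv_into (fst A) f1 z)
                                        else g2 (inv_into (fst B) g1 z))" for z
  show "\<theta> (f1 x) = f2 x" if "x \<in> fst A" for x
    using that g1 by (simp add: \<theta>_def gluing_maps_def)
  show "\<theta> (g1 y) = g2 y" if y: "y \<in> fst B" for y
  proof (cases "g1 y \<in> f1 ` fst A")
    case True
    then have "g1 y = g1 b" using g1 y unfolding gluing_maps_def by auto
    then have "y = b" using g1 y b unfolding gluing_maps_def by (meson inj_onD)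
    then show ?thesis using True g1 g2 a by (simp add: \<theta>_def gluing_maps_def)
  next
    case False
    then show ?thesis using y g1 by (simp add: \<theta>_def gluing_maps_def)
  qed
qed

lemma gluing_maps_iso:
  assumes cA: "closed_struc A" and cB: "closed_struc B" and a: "a \<in> fst A" and b: "b \<in> fst B"
    and g1: "gluing_maps f1 A a g1 B b" and g2: "gluing_maps f2 A a g2 B b"
  shows "struc_iso (union_struc (map_struc f1 A) (map_struc g1 B))
                   (union_struc (map_struc f2 A) (map_struc g2 B))"
proof -
  obtain \<theta> where \<theta>: "\<And>x. x \<in> fst A \<Longrightarrow> \<theta> (f1 x) = f2 x" "\<And>y. y \<in> fst B \<Longrightarrow> \<theta> (g1 y) = g2 y"
    using gluing_maps_transfer[OF a b g1 g2] by blast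
  obtain \<theta>' where \<theta>': "\<And>x. x \<in> fst A \<Longrightarrow> \<theta>' (f2 x) = f1 x" "\<And>y. y \<in> fst B \<Longrightarrow> \<theta>' (g2 y) = g1 y"
    using gluing_maps_transfer[OF a b g2 g1] by blast
  have "inj_on \<theta> (f1 ` fst A \<union> g1 ` fst B)"
    by (rule inj_on_inverseI[where g = \<theta>']) (auto simp: \<theta> \<theta>')
  moreover have "map_struc \<theta> (union_struc (map_struc f1 A) (map_struc g1 B))
               = union_struc (map_struc f2 A) (map_struc g2 B)"
    unfolding map_struc_union_struc map_struc_comp
    using map_struc_cong[OF cA, of "\<theta> \<circ> f1" f2] map_struc_cong[OF cB, of "\<theta> \<circ> g1" g2] \<theta>
    by simp
  ultimately show ?thesis
    by (metis struc_iso_map_struc fst_union_struc fst_map_struc)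
qed

lemma forest_mono:
  assumes "is_forest ar A" "is_struc ar B" "\<And>R. snd B R \<subseteq> snd A R"
  shows "is_forest ar B"
proof -
  have sub: "blocks B \<subseteq> blocks A" using assms(3) by (auto simp: blocks_def)
  then have "no_parallel B" using assms(1) by (auto simp: is_forest_def no_parallel_def)
  moreover have "\<not> has_cycle B"
    using assms(1) sub unfolding is_forest_def has_cycle_def by (meson order_trans)
  ultimately show ?thesis using assms(2) by (simp add: is_forest_def)
qed

lemma rooted_forest_point: "rooted_forest ar (nullary_struc {z} {}) z"
proof -
  have "blocks (nullary_struc {z} {} :: 'r struc) = {}" by (simp add: blocks_def)
  then show ?thesis
    by (auto simp: rooted_forest_def is_forest_def is_struc_def no_parallel_def has_cycle_def)
qed

text \<open>What surrounds the doubled copy of \<open>Y\<close> after gluing \<open>C\<close> at the root \<open>0\<close> of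
  \<open>Y \<union> W\<close> (lemma \<open>glue_union_struc\<close>); the extra vertex \<open>2 * r\<close> makes the gluing
  vertex a vertex of the context.\<close>

definition glue_context :: "'r struc \<Rightarrow> 'r struc \<Rightarrow> nat \<Rightarrow> nat \<Rightarrow> 'r struc" where
  "glue_context W C c r = union_struc
     (union_struc (map_struc (\<lambda>x. 2 * x) W) (map_struc (\<lambda>y. if y = c then 0 else 2 * y + 1) C))
     (nullary_struc {2 * r} {})"

lemma is_struc_glue_context: "is_struc ar W \<Longrightarrow> is_struc ar C \<Longrightarrow> is_struc ar (glue_context W C c r)"
  unfolding glue_context_def
  by (intro is_struc_union_struc is_struc_map_struc is_struc_nullary_struc) auto

lemma glue_union_struc:
  assumes "y \<in> fst Y" "k y = r"
  shows "glue (union_struc (map_struc k Y) W) 0 C c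
       = union_struc (map_struc ((\<lambda>x. 2 * x) \<circ> k) Y) (glue_context W C c r)"
proof -
  have "glue (union_struc (map_struc k Y) W) 0 C c =
        union_struc (union_struc (map_struc ((\<lambda>x. 2 * x) \<circ> k) Y) (map_struc (\<lambda>x. 2 * x) W))
          (map_struc (\<lambda>y. if y = c then 0 else 2 * y + 1) C)"
    by (simp add: glue_eq_union_struc map_struc_union_struc map_struc_comp cong: if_cong)
  also have "\<dots> = union_struc (map_struc ((\<lambda>x. 2 * x) \<circ> k) Y) (glue_context W C c r)"
    using assms by (intro struc_eqI) (auto simp: glue_context_def intro: image_eqI[of _ _ y])
  finally show ?thesis .
qed

lemma glue_context_meets:
  assumes y: "y \<in> fst Y" "k y = r" and kW: "k ` fst Y \<inter> insert 0 (fst W) \<subseteq> {r}"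
  shows "((\<lambda>x. 2 * x) \<circ> k) ` fst Y \<inter> fst (glue_context W C c r) = {((\<lambda>x. 2 * x) \<circ> k) y}"
proof
  show "{((\<lambda>x. 2 * x) \<circ> k) y} \<subseteq> ((\<lambda>x. 2 * x) \<circ> k) ` fst Y \<inter> fst (glue_context W C c r)"
    using y by (auto simp: glue_context_def intro!: image_eqI[of _ _ y])
  have odd: "2 * u \<noteq> Suc (2 * v)" for u v :: nat by presburger
  have "k y' = r" if "y' \<in> fst Y" "2 * k y' \<in> fst (glue_context W C c r)" for y'
  proof -
    have "k y' \<in> insert 0 (fst W) \<or> k y' = r"
      using that odd by (auto simp: glue_context_def split: if_splits)
    then show ?thesis using kW that(1) by auto
  qed
  then show "((\<lambda>x. 2 * x) \<circ> k) ` fst Y \<inter> fst (glue_context W C c r) \<subseteq> {((\<lambda>x. 2 * x) \<circ> k) y}"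
    using y by auto
qed

locale forest_fam =
  fixes ar :: "'r \<Rightarrow> nat" and F :: "'r struc set"
  assumes family: "forest_family ar F"
begin

abbreviation res :: "'r struc \<Rightarrow> nat \<Rightarrow> ('r struc \<times> nat) set" where
  "res \<equiv> residual ar F"

lemma mem_is_forest: "X \<in> F \<Longrightarrow> is_forest ar X"
  using family unfolding forest_family_def by blast

lemma struc_iso_mem: "X \<in> F \<Longrightarrow> struc_iso X Y \<Longrightarrow> Y \<in> F"
  using family unfolding forest_family_def by blast

lemma map_struc_mem: "X \<in> F \<Longrightarrow> inj_on \<theta> (fst X) \<Longrightarrow> map_struc \<theta> X \<in> F"
  using struc_iso_mem struc_iso_map_struc by blast

lemma union_struc_mem_iff_glue:
  assumes "closed_struc A" "closed_struc B" "a \<in> fst A" "b \<in> fst B" "gluing_maps f A a g B b"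
  shows "union_struc (map_struc f A) (map_struc g B) \<in> F \<longleftrightarrow> glue A a B b \<in> F"
proof -
  have std: "gluing_maps ((\<lambda>x. 2 * x) \<circ> (\<lambda>x. x)) A a (\<lambda>y. if y = b then 2 * a else 2 * y + 1) B b"
    using gluing_maps_glue[of "\<lambda>x. x" A a b B] assms(3,4) by simp
  have "glue A a B b = union_struc (map_struc ((\<lambda>x. 2 * x) \<circ> (\<lambda>x. x)) A)
                         (map_struc (\<lambda>y. if y = b then 2 * a else 2 * y + 1) B)"
    by (simp add: glue_eq_union_struc comp_def)
  then show ?thesis
    using gluing_maps_iso[OF assms(1-4) assms(5) std] gluing_maps_iso[OF assms(1-4) std assms(5)]
      struc_iso_mem by metis
qed

lemma residual_map_struc:
  assumes A: "closed_struc A" and a: "a \<in> fst A" and \<theta>: "inj_on \<theta> (fst A)"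
  shows "res (map_struc \<theta> A) (\<theta> a) = res A a"
proof -
  have "glue (map_struc \<theta> A) (\<theta> a) C c \<in> F \<longleftrightarrow> glue A a C c \<in> F"
    if C: "rooted_forest ar C c" for C c
  proof -
    note c = rooted_forest_root[OF C]
    have "glue (map_struc \<theta> A) (\<theta> a) C c =
          union_struc (map_struc ((\<lambda>x. 2 * x) \<circ> \<theta>) A)
                      (map_struc (\<lambda>y. if y = c then 2 * \<theta> a else 2 * y + 1) C)"
      by (simp add: glue_eq_union_struc map_struc_comp)
    then show ?thesis
      using union_struc_mem_iff_glue[OF A rooted_forest_closed_struc[OF C] a c
              gluing_maps_glue[OF \<theta> a c]] by simp
  qed
  then show ?thesis by (auto simp: residual_def)
qed

lemma mem_iff_point_residual:
  assumes A: "rooted_forest ar A a"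
  shows "A \<in> F \<longleftrightarrow> (nullary_struc {0} {}, 0) \<in> res A a"
proof -
  have "glue A a (nullary_struc {0} {}) 0 = map_struc (\<lambda>x. 2 * x) A"
    using rooted_forest_root[OF A] by (intro struc_eqI) (auto simp: glue_eq_union_struc)
  moreover have "map_struc (\<lambda>x. 2 * x) A \<in> F \<longleftrightarrow> A \<in> F"
  proof
    assume "map_struc (\<lambda>x. 2 * x) A \<in> F"
    then have "map_struc (\<lambda>x. x div 2) (map_struc (\<lambda>x. 2 * x) A) \<in> F"
      by (rule map_struc_mem) (auto simp: inj_on_def)
    then show "A \<in> F"
      by (simp add: map_struc_comp comp_def map_struc_ident)
  qed (auto intro: map_struc_mem simp: inj_on_def)
  ultimately show ?thesis
    using rooted_forest_point[of ar 0] by (simp add: residual_def)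
qed

text \<open>The context \<open>W\<close>, rooted at the gluing vertex, lies in the residual of \<open>X\<close> at \<open>x\<close>.\<close>

lemma union_struc_mem_transfer:
  assumes X: "rooted_forest ar X x" and h: "inj_on h (fst X)" and hW: "h ` fst X \<inter> fst W = {h x}"
    and X': "rooted_forest ar X' x'" and h': "inj_on h' (fst X')" and hW': "h' ` fst X' \<inter> fst W = {h x}"
    and root: "h' x' = h x" and W: "is_struc ar W" and eq: "res X x = res X' x'"
    and mem: "union_struc (map_struc h X) W \<in> F"
  shows "union_struc (map_struc h' X') W \<in> F"
proof -
  have "is_forest ar W"
    by (rule forest_mono[OF mem_is_forest[OF mem] W]) simp
  moreover have w: "h x \<in> fst W" using hW by auto
  ultimately have Ww: "rooted_forest ar W (h x)" by (simp add: rooted_forest_def)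
  have glue_iff: "union_struc (map_struc k Y) W \<in> F \<longleftrightarrow> glue Y y W (h x) \<in> F"
    if Y: "rooted_forest ar Y y" and k: "inj_on k (fst Y)" "k ` fst Y \<inter> fst W = {h x}" "k y = h x"
    for k Y y
    using union_struc_mem_iff_glue[OF rooted_forest_closed_struc[OF Y] is_struc_closed_struc[OF W]
            rooted_forest_root[OF Y] w, of k "\<lambda>z. z"] k
    by (simp add: gluing_maps_def map_struc_ident)
  have "(W, h x) \<in> res X x"
    using mem glue_iff[OF X h hW refl] Ww by (simp add: residual_def)
  then have "(W, h x) \<in> res X' x'" using eq by simp
  then show ?thesis
    using glue_iff[OF X' h' hW' root] by (simp add: residual_def)
qed

lemma residual_union_struc_cong:
  assumes X: "rooted_forest ar X x" and h: "inj_on h (fst X)" and hW: "h ` fst X \<inter> insert 0 (fst W) \<subseteq> {h x}"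
    and X': "rooted_forest ar X' x'" and h': "inj_on h' (fst X')" and hW': "h' ` fst X' \<inter> insert 0 (fst W) \<subseteq> {h x}"
    and root: "h' x' = h x" and W: "is_struc ar W" and eq: "res X x = res X' x'"
  shows "res (union_struc (map_struc h X) W) 0 = res (union_struc (map_struc h' X') W) 0"
proof -
  have "glue (union_struc (map_struc h X) W) 0 C c \<in> F \<longleftrightarrow> glue (union_struc (map_struc h' X') W) 0 C c \<in> F"
    if C: "rooted_forest ar C c" for C c
  proof -
    let ?W = "glue_context W C c (h x)"
    have W': "is_struc ar ?W" using W rooted_forest_is_struc[OF C] by (rule is_struc_glue_context)
    have inj: "inj_on ((\<lambda>x. 2 * x) \<circ> k) S" if "inj_on k S" for k :: "nat \<Rightarrow> nat" and S
      using that by (auto simp: inj_on_def)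
    note x = rooted_forest_root[OF X] and x' = rooted_forest_root[OF X']
    note meet = glue_context_meets[OF x refl hW, of C c] glue_context_meets[OF x' root hW', of C c]
    show ?thesis
      unfolding glue_union_struc[of x X h, OF x refl] glue_union_struc[of x' X' h', OF x' root]
      using union_struc_mem_transfer[OF X inj[OF h] meet(1) X' inj[OF h'] _ _ W' eq]
        union_struc_mem_transfer[OF X' inj[OF h'] _ X inj[OF h] _ _ W' eq[symmetric]] meet root
      by (auto simp: comp_def)
  qed
  then show ?thesis by (auto simp: residual_def)
qed

end

section \<open>Assemblies\<close>

abbreviation rooted_pair :: "('r \<Rightarrow> nat) \<Rightarrow> 'r struc \<times> nat \<Rightarrow> bool" where
  "rooted_pair ar B \<equiv> rooted_forest ar (fst B) (snd B)"

text \<open>An assembly is rooted at vertex \<open>0\<close>. Piece \<open>j\<close> is placed on the vertices \<open>code j (Suc z)\<close>,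
  except that its root becomes the port \<open>port i j\<close>; the port of the distinguished piece \<open>i\<close> is the
  root \<open>0\<close> itself, the other ports \<open>code j 0\<close> are vertices of the skeleton \<open>W\<close>.\<close>

definition code :: "nat \<Rightarrow> nat \<Rightarrow> nat" where
  "code j z = Suc (prod_encode (j, z))"

definition port :: "nat \<Rightarrow> nat \<Rightarrow> nat" where
  "port i j = (if j = i then 0 else code j 0)"

definition slot :: "nat \<Rightarrow> nat \<Rightarrow> nat \<Rightarrow> nat \<Rightarrow> nat" where
  "slot i j r z = (if z = r then port i j else code j (Suc z))"

definition place :: "nat \<Rightarrow> nat \<Rightarrow> 'r struc \<times> nat \<Rightarrow> 'r struc" where
  "place i j B = map_struc (slot i j (snd B)) (fst B)"

definition assemble :: "'r struc \<Rightarrow> nat \<Rightarrow> nat set \<Rightarrow> (nat \<Rightarrow> 'r struc \<times> nat) \<Rightarrow> 'r struc" where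
  "assemble W i I Bs = union_struc W (Union_struc I (\<lambda>j. place i j (Bs j)))"

lemma code_eq_iff [simp]: "code j z = code j' z' \<longleftrightarrow> j = j' \<and> z = z'"
  by (simp add: code_def prod_encode_eq)

lemma code_neq_zero [simp]: "code j z \<noteq> 0" "0 \<noteq> code j z"
  by (simp_all add: code_def)

lemma inj_slot: "inj (slot i j r)"
  by (auto simp: inj_def slot_def port_def)

lemma slot_eq_slot_imp: "slot i j r z = slot i l r' z' \<Longrightarrow> j = l"
  by (auto simp: slot_def port_def split: if_splits)

lemma slot_root [simp]: "slot i j r r = port i j"
  by (simp add: slot_def)

lemma code_Suc_notin_place: "l \<noteq> j \<Longrightarrow> code j (Suc z) \<notin> fst (place i l B)"
  by (auto simp: place_def slot_def port_def)

lemma is_struc_place: "rooted_pair ar B \<Longrightarrow> is_struc ar (place i j B)"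
  unfolding place_def by (intro is_struc_map_struc rooted_forest_is_struc)

lemma assemble_insert:
  "assemble W i (insert j I) Bs = union_struc (place i j (Bs j)) (assemble W i I Bs)"
  by (rule struc_eqI) (auto simp: assemble_def)

lemma is_struc_assemble:
  "finite I \<Longrightarrow> is_struc ar W \<Longrightarrow> (\<And>j. j \<in> I \<Longrightarrow> rooted_pair ar (Bs j))
    \<Longrightarrow> is_struc ar (assemble W i I Bs)"
  unfolding assemble_def by (intro is_struc_union_struc is_struc_Union_struc is_struc_place)

context forest_fam
begin

abbreviation res_pair :: "'r struc \<times> nat \<Rightarrow> ('r struc \<times> nat) set" where
  "res_pair B \<equiv> res (fst B) (snd B)"

lemma residual_place_cong:
  assumes B: "rooted_pair ar B" and B': "rooted_pair ar B'" and eq: "res_pair B = res_pair B'"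
    and U: "is_struc ar U" "\<And>z. code j (Suc z) \<notin> fst U"
  shows "res (union_struc (place i j B) U) 0 = res (union_struc (place i j B') U) 0"
proof -
  have meet: "slot i j r ` S \<inter> insert 0 (fst U) \<subseteq> {port i j}" for r S
    using U(2) by (auto simp: slot_def port_def)
  show ?thesis
    unfolding place_def
    by (rule residual_union_struc_cong[OF B _ _ B' _ _ _ U(1) eq])
       (use meet in \<open>auto intro: inj_on_subset[OF inj_slot]\<close>)
qed

lemma residual_assemble_cong:
  assumes "finite I" and "is_struc ar W" and "\<And>j z. j \<in> I \<Longrightarrow> code j (Suc z) \<notin> fst W"
    and "\<And>j. j \<in> I \<Longrightarrow> rooted_pair ar (Bs j) \<and> rooted_pair ar (Bs' j) \<and> res_pair (Bs j) = res_pair (Bs' j)"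
  shows "res (assemble W i I Bs) 0 = res (assemble W i I Bs') 0"
  using assms
proof (induction I arbitrary: W rule: finite_induct)
  case empty
  then show ?case by (simp add: assemble_def Union_struc_def)
next
  case (insert j I)
  define W' where "W' = union_struc W (place i j (Bs' j))"
  have rooted: "rooted_pair ar (Bs l)" "rooted_pair ar (Bs' l)" if "l \<in> insert j I" for l
    using insert.prems(3) that by blast+
  have U: "is_struc ar (assemble W i I Bs)"
    using insert.hyps(1) insert.prems(1) rooted by (intro is_struc_assemble) auto
  have fresh: "code j (Suc z) \<notin> fst (assemble W i I Bs)" for z
  proof -
    have "code j (Suc z) \<notin> fst (place i l (Bs l))" if "l \<in> I" for l
      using that insert.hyps(2) by (intro code_Suc_notin_place) auto
    then show ?thesis using insert.prems(2) by (auto simp: assemble_def)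
  qed
  have "res (assemble W i (insert j I) Bs) 0
      = res (union_struc (place i j (Bs' j)) (assemble W i I Bs)) 0"
    unfolding assemble_insert
    by (rule residual_place_cong[OF _ _ _ U fresh]) (use insert.prems(3) in blast)+
  also have "union_struc (place i j (Bs' j)) (assemble W i I Bs) = assemble W' i I Bs"
    by (rule struc_eqI) (auto simp: W'_def assemble_def)
  also have "res (assemble W' i I Bs) 0 = res (assemble W' i I Bs') 0"
  proof (rule insert.IH)
    show "is_struc ar W'"
      unfolding W'_def using insert.prems(1) rooted by (intro is_struc_union_struc is_struc_place) auto
    show "code l (Suc z) \<notin> fst W'" if "l \<in> I" for l z
      using that insert.hyps(2) insert.prems(2) code_Suc_notin_place[of j l z i "Bs' j"]
      by (auto simp: W'_def)
  qed (use insert.prems(3) in auto)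
  also have "assemble W' i I Bs' = assemble W i (insert j I) Bs'"
    by (rule struc_eqI) (auto simp: W'_def assemble_def)
  finally show ?case .
qed

end

section \<open>Walks in forests\<close>

definition size_struc :: "'r struc \<Rightarrow> nat" where
  "size_struc A = card (fst A) + card (blocks A)"

definition delete_tuple :: "'r struc \<Rightarrow> 'r \<Rightarrow> nat list \<Rightarrow> 'r struc" where
  "delete_tuple A R t = (fst A, (snd A)(R := snd A R - {t}))"

definition adjacent :: "'r struc \<Rightarrow> nat rel" where
  "adjacent A = {(x, y). \<exists>R t. t \<in> snd A R \<and> x \<in> set t \<and> y \<in> set t}"

definition walk :: "'r struc \<Rightarrow> (nat \<Rightarrow> nat) \<Rightarrow> (nat \<Rightarrow> 'r \<times> nat list) \<Rightarrow> nat \<Rightarrow> bool" where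
  "walk A w c m \<longleftrightarrow> (\<forall>p<m. c p \<in> blocks A \<and> w p \<in> set (snd (c p)) \<and> w (Suc p) \<in> set (snd (c p)))"

lemma finite_blocks:
  fixes A :: "'r::finite struc"
  assumes "is_struc ar A"
  shows "finite (blocks A)"
proof (rule finite_subset)
  show "blocks A \<subseteq> (\<Union>R. {R} \<times> {t. set t \<subseteq> fst A \<and> length t = ar R})"
    using assms by (auto simp: blocks_def is_struc_def)
  show "finite (\<Union>R. {R} \<times> {t. set t \<subseteq> fst A \<and> length t = ar R})"
    using assms by (auto simp: is_struc_def intro!: finite_lists_length_eq)
qed

lemma blocks_mono: "(\<And>R. snd B R \<subseteq> snd A R) \<Longrightarrow> blocks B \<subseteq> blocks A"
  by (auto simp: blocks_def)

lemma fst_delete_tuple [simp]: "fst (delete_tuple A R t) = fst A"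
  and snd_delete_tuple: "snd (delete_tuple A R t) S = (if S = R then snd A R - {t} else snd A S)"
  by (simp_all add: delete_tuple_def)

lemma blocks_delete_tuple: "blocks (delete_tuple A R t) = blocks A - {(R, t)}"
  by (auto simp: blocks_def snd_delete_tuple split: if_splits)

lemma union_tuple_delete_tuple:
  "t \<in> snd A R \<Longrightarrow> set t \<subseteq> fst A \<Longrightarrow> union_struc (tuple_struc R t) (delete_tuple A R t) = A"
  by (rule struc_eqI) (auto simp: snd_delete_tuple)

lemma is_forest_delete_tuple: "is_forest ar A \<Longrightarrow> is_forest ar (delete_tuple A R t)"
  by (rule forest_mono) (auto simp: is_forest_def is_struc_def snd_delete_tuple)

lemma is_forest_restrict_struc: "is_forest ar A \<Longrightarrow> K \<subseteq> fst A \<Longrightarrow> is_forest ar (restrict_struc A K)"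
  by (rule forest_mono) (auto simp: is_forest_def intro: is_struc_restrict_struc)

lemma sym_adjacent: "sym (adjacent A)"
  by (auto simp: sym_def adjacent_def)

lemma adjacent_rtrancl_Image_subset:
  assumes "closed_struc A" "z \<in> fst A"
  shows "(adjacent A)\<^sup>* `` {z} \<subseteq> fst A"
proof
  fix y assume "y \<in> (adjacent A)\<^sup>* `` {z}"
  then have "(z, y) \<in> (adjacent A)\<^sup>*" by simp
  then show "y \<in> fst A"
    using assms by (induction rule: rtrancl_induct) (auto simp: adjacent_def closed_struc_def)
qed

lemma tuple_subset_adjacent_rtrancl_Image:
  assumes u: "u \<in> snd A S" and x: "x \<in> set u" "x \<in> (adjacent A)\<^sup>* `` {z}"
  shows "set u \<subseteq> (adjacent A)\<^sup>* `` {z}"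
proof
  fix y assume "y \<in> set u"
  then have "(x, y) \<in> adjacent A" using u x(1) by (auto simp: adjacent_def)
  then show "y \<in> (adjacent A)\<^sup>* `` {z}" using x(2) by (auto intro: rtrancl_into_rtrancl)
qed

lemma walk_of_adjacent_rtrancl:
  assumes "(x, y) \<in> (adjacent A)\<^sup>*"
  obtains w c m where "w 0 = x" "w m = y" "walk A w c m"
  using assms
proof (induction arbitrary: thesis rule: rtrancl_induct)
  case base
  show ?case by (rule base[of "\<lambda>_. x" 0]) (simp_all add: walk_def)
next
  case (step y z)
  obtain w c m where wcm: "w 0 = x" "w m = y" "walk A w c m" by (rule step.IH)
  obtain R t where Rt: "t \<in> snd A R" "y \<in> set t" "z \<in> set t"
    using step.hyps(2) by (auto simp: adjacent_def)
  have "walk A (w(Suc m := z)) (c(m := (R, t))) (Suc m)"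
    using wcm Rt by (auto simp: walk_def blocks_def less_Suc_eq)
  then show ?case by (rule step.prems[rotated 2]) (use wcm in simp_all)
qed

lemma walk_prefix: "walk A w c m \<Longrightarrow> p \<le> m \<Longrightarrow> walk A w c p"
  by (simp add: walk_def)

lemma walk_shortcut:
  assumes W: "walk A w c m" and pq: "p < q" "q < m" and b: "b \<in> blocks A"
    and bp: "w p \<in> set (snd b)" and bq: "w (Suc q) \<in> set (snd b)"
  obtains w' c' where "walk A w' c' (m - (q - p))" "w' 0 = w 0" "w' (m - (q - p)) = w m"
proof
  let ?w = "\<lambda>k. if k \<le> p then w k else w (k + (q - p))"
  let ?c = "\<lambda>k. if k < p then c k else if k = p then b else c (k + (q - p))"
  show "?w 0 = w 0" "?w (m - (q - p)) = w m" using pq by auto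
  show "walk A ?w ?c (m - (q - p))"
    unfolding walk_def
  proof (intro allI impI)
    fix k assume k: "k < m - (q - p)"
    consider "k < p" | "k = p" | "p < k" by linarith
    then show "?c k \<in> blocks A \<and> ?w k \<in> set (snd (?c k)) \<and> ?w (Suc k) \<in> set (snd (?c k))"
    proof cases
      case 1 then show ?thesis using W pq by (auto simp: walk_def)
    next
      case 2 then show ?thesis using b bp bq pq by simp
    next
      case 3 then show ?thesis using W k pq by (auto simp: walk_def)
    qed
  qed
qed

text \<open>A shortest walk between two distinct vertices of \<open>S\<close> admits no shortcut, so it repeats
  neither vertices nor blocks.\<close>

lemma shortest_walk:
  assumes "walk A w c m" "w 0 \<in> S" "w m \<in> S" "w 0 \<noteq> w m"
  obtains w c m where "walk A w c m" "w 0 \<in> S" "w m \<in> S" "w 0 \<noteq> w m"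
    "inj_on w {..m}" "inj_on c {..<m}"
proof -
  define P where "P m \<longleftrightarrow> (\<exists>w c. walk A w c m \<and> w 0 \<in> S \<and> w m \<in> S \<and> w 0 \<noteq> w m)" for m
  have "P m" using assms by (auto simp: P_def)
  define n where "n = (LEAST m. P m)"
  have "P n" unfolding n_def by (rule LeastI[of P, OF \<open>P m\<close>])
  then obtain w c where wc: "walk A w c n" "w 0 \<in> S" "w n \<in> S" "w 0 \<noteq> w n"
    by (auto simp: P_def)
  have shorter: False if "k < n" "P k" for k
    using that not_less_Least unfolding n_def by blast
  have no_shortcut: False
    if sc: "p < q" "q < n" "b \<in> blocks A" "w p \<in> set (snd b)" "w (Suc q) \<in> set (snd b)" for p q b
  proof -
    obtain w' c' where "walk A w' c' (n - (q - p))" "w' 0 = w 0" "w' (n - (q - p)) = w n"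
      by (rule walk_shortcut[OF wc(1) sc])
    then have "P (n - (q - p))" using wc(2-4) unfolding P_def by auto
    then show False by (rule shorter[rotated]) (use sc(1,2) in auto)
  qed
  have step: "c p \<in> blocks A" "w p \<in> set (snd (c p))" "w (Suc p) \<in> set (snd (c p))" if "p < n" for p
    using wc(1) that by (auto simp: walk_def)
  have "w p \<noteq> w q" if "p < q" "q \<le> n" for p q
  proof
    assume eq: "w p = w q"
    show False
    proof (cases "q < n")
      case True
      then show False using no_shortcut[OF that(1) True step(1)[OF True]] step(2,3)[OF True] eq by simp
    next
      case False
      then have "P p"
        using that eq wc walk_prefix[OF wc(1), of p] unfolding P_def by (intro exI[of _ w] exI[of _ c]) auto
      then show False by (rule shorter[rotated]) (use that False in auto)
    qed
  qed
  then have "inj_on w {..n}"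
    by (intro inj_onI) (metis atMost_iff linorder_neqE_nat)
  moreover have "c p \<noteq> c q" if "p < q" "q < n" for p q
    using no_shortcut[OF that step(1)] step that by (metis order.strict_trans)
  then have "inj_on c {..<n}"
    by (intro inj_onI) (metis lessThan_iff linorder_neqE_nat)
  ultimately show ?thesis using that wc by blast
qed

lemma has_cycle_of_walk:
  assumes t: "t \<in> snd A R" and W: "walk (delete_tuple A R t) w c m"
    and ends: "w 0 \<in> set t" "w m \<in> set t" "w 0 \<noteq> w m"
    and inj: "inj_on w {..m}" "inj_on c {..<m}"
  shows "has_cycle A"
proof -
  define vs where "vs = map w [0..<Suc m]"
  define bs where "bs = map c [0..<m] @ [(R, t)]"
  have m: "1 \<le> m" using ends(3) by (cases m) auto
  have len: "length vs = Suc m" "length bs = Suc m" by (simp_all add: vs_def bs_def)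
  have cs: "set (map c [0..<m]) \<subseteq> blocks A - {(R, t)}"
    using W by (auto simp: walk_def blocks_delete_tuple)
  have "set [0..<Suc m] = {..m}" by auto
  then have "distinct vs"
    using inj(1) by (simp add: vs_def distinct_map del: upt_Suc)
  moreover have "distinct bs"
    using inj(2) cs by (auto simp: bs_def distinct_map atLeast0LessThan simp del: set_map)
  moreover have "set bs \<subseteq> blocks A"
    using cs t by (auto simp: bs_def blocks_def simp del: set_map)
  moreover have "vs ! p \<in> set (snd (bs ! p)) \<and> vs ! ((p + 1) mod length vs) \<in> set (snd (bs ! p))"
    if p: "p < length vs" for p
  proof (cases "p < m")
    case True
    then show ?thesis
      using W by (simp add: vs_def bs_def len nth_append walk_def del: upt_Suc)
  next
    case False
    then have "p = m" using p len by simp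
    then show ?thesis using ends by (simp add: vs_def bs_def len nth_append del: upt_Suc)
  qed
  ultimately show ?thesis
    unfolding has_cycle_def using len m by (intro exI[of _ vs] exI[of _ bs]) auto
qed

text \<open>A path between two vertices of a deleted block, made simple, closes a cycle with the block.\<close>

lemma forest_delete_tuple_components_disjoint:
  assumes A: "is_forest ar A" and t: "t \<in> snd A R" and jl: "j < length t" "l < length t" "j \<noteq> l"
  shows "(adjacent (delete_tuple A R t))\<^sup>* `` {t ! j} \<inter> (adjacent (delete_tuple A R t))\<^sup>* `` {t ! l} = {}"
proof (rule ccontr)
  let ?r = "(adjacent (delete_tuple A R t))\<^sup>*"
  assume "?r `` {t ! j} \<inter> ?r `` {t ! l} \<noteq> {}"
  then obtain z where "(t ! j, z) \<in> ?r" "(t ! l, z) \<in> ?r" by auto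
  then have "(t ! j, t ! l) \<in> ?r"
    using sym_rtrancl[OF sym_adjacent] by (meson rtrancl_trans symD)
  then obtain w c m where "w 0 = t ! j" "w m = t ! l" "walk (delete_tuple A R t) w c m"
    by (rule walk_of_adjacent_rtrancl)
  moreover have "distinct t" using A t by (auto simp: is_forest_def no_parallel_def blocks_def)
  then have "t ! j \<noteq> t ! l" using jl by (simp add: nth_eq_iff_index_eq)
  ultimately obtain w c m where "walk (delete_tuple A R t) w c m" "w 0 \<in> set t" "w m \<in> set t"
      "w 0 \<noteq> w m" "inj_on w {..m}" "inj_on c {..<m}"
    using shortest_walk[of _ w c m "set t"] jl by (metis nth_mem)
  then have "has_cycle A" using has_cycle_of_walk[OF t] by blast
  then show False using A by (simp add: is_forest_def)
qed

section \<open>Decomposition of rooted forests\<close>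

text \<open>The three shapes of a rooted forest: a lone root carrying nullary facts; a root in no block,
  split off from the rest (two pieces); a root in a block, with one piece hanging at each position.\<close>

definition skeletons :: "('r \<Rightarrow> nat) \<Rightarrow> ('r struc \<times> nat \<times> nat) set" where
  "skeletons ar =
     {(nullary_struc {0} N, 0, 0) | N. \<forall>R\<in>N. ar R = 0} \<union>
     {(nullary_struc {} {}, 0, 2)} \<union>
     {(tuple_struc R (map (port i) [0..<ar R]), i, ar R) | R i. i < ar R}"

definition splits_as_assembly :: "('r \<Rightarrow> nat) \<Rightarrow> 'r struc \<Rightarrow> nat \<Rightarrow> bool" where
  "splits_as_assembly ar A a \<longleftrightarrow> (\<exists>W i n Bs \<theta>. (W, i, n) \<in> skeletons ar \<and>
     (\<forall>j<n. rooted_pair ar (Bs j) \<and> size_struc (fst (Bs j)) < size_struc A) \<and>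
     inj_on \<theta> (fst A) \<and> \<theta> a = 0 \<and> map_struc \<theta> A = assemble W i {..<n} Bs)"

lemma skeletonsD:
  assumes "(W, i, n) \<in> skeletons ar"
  shows "is_struc ar W" "\<And>j z. code j (Suc z) \<notin> fst W"
  using assms by (auto simp: skeletons_def port_def intro: is_struc_nullary_struc is_struc_tuple_struc)

lemma finite_skeletons: "finite (skeletons (ar :: 'r::finite \<Rightarrow> nat))"
proof -
  have "finite {(nullary_struc {0} N, 0, 0) | N. \<forall>R\<in>N. ar R = 0}"
    by (rule finite_subset[of _ "(\<lambda>N. (nullary_struc {0} N, 0, 0)) ` UNIV"]) auto
  moreover have "{(tuple_struc R (map (port i) [0..<ar R]), i, ar R) | R i. i < ar R}
      = (\<lambda>(R, i). (tuple_struc R (map (port i) [0..<ar R]), i, ar R)) ` (\<Union>R. {R} \<times> {..<ar R})"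
    by (auto simp: image_iff)
  ultimately show ?thesis
    unfolding skeletons_def by simp
qed

lemma size_struc_less:
  fixes A :: "'r::finite struc"
  assumes A: "is_struc ar A" and sub: "fst B \<subseteq> fst A" "blocks B \<subseteq> blocks A"
    and proper: "fst B \<noteq> fst A \<or> blocks B \<noteq> blocks A"
  shows "size_struc B < size_struc A"
proof -
  have fin: "finite (fst A)" "finite (blocks A)"
    using A finite_blocks[OF A] by (auto simp: is_struc_def)
  have le: "card (fst B) \<le> card (fst A)" "card (blocks B) \<le> card (blocks A)"
    using sub fin by (simp_all add: card_mono)
  from proper have "card (fst B) < card (fst A) \<or> card (blocks B) < card (blocks A)"
  proof
    assume "fst B \<noteq> fst A"
    then have "fst B \<subset> fst A" using sub(1) by (rule psubsetI[rotated])
    then show ?thesis using fin(1) by (simp add: psubset_card_mono)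
  next
    assume "blocks B \<noteq> blocks A"
    then have "blocks B \<subset> blocks A" using sub(2) by (rule psubsetI[rotated])
    then show ?thesis using fin(2) by (simp add: psubset_card_mono)
  qed
  then show ?thesis using le unfolding size_struc_def by linarith
qed

lemma map_struc_partition:
  assumes A: "closed_struc A" and cover: "fst A = (\<Union>j\<in>I. D j)"
    and tuples: "\<And>R t. t \<in> snd A R \<Longrightarrow> \<exists>j\<in>I. set t \<subseteq> D j"
    and \<theta>: "\<And>j z. j \<in> I \<Longrightarrow> z \<in> D j \<Longrightarrow> \<theta> z = h j z"
  shows "map_struc \<theta> A = Union_struc I (\<lambda>j. map_struc (h j) (restrict_struc A (D j)))"
proof (rule struc_eqI)
  show "fst (map_struc \<theta> A) = fst (Union_struc I (\<lambda>j. map_struc (h j) (restrict_struc A (D j))))"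
    unfolding fst_map_struc fst_Union_struc fst_restrict_struc cover image_UN
    by (rule SUP_cong[OF refl], rule image_cong[OF refl]) (simp add: \<theta>)
  fix R
  have map_eq: "map \<theta> t = map (h j) t" if "j \<in> I" "set t \<subseteq> D j" for j t
    using that \<theta> by (auto intro: map_cong)
  show "snd (map_struc \<theta> A) R = snd (Union_struc I (\<lambda>j. map_struc (h j) (restrict_struc A (D j)))) R"
  proof (rule set_eqI, rule iffI)
    fix u assume "u \<in> snd (map_struc \<theta> A) R"
    then obtain t where t: "t \<in> snd A R" "u = map \<theta> t" by auto
    obtain j where "j \<in> I" "set t \<subseteq> D j" using tuples[OF t(1)] by blast
    then show "u \<in> snd (Union_struc I (\<lambda>j. map_struc (h j) (restrict_struc A (D j)))) R"
      using t map_eq by auto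
  next
    fix u assume "u \<in> snd (Union_struc I (\<lambda>j. map_struc (h j) (restrict_struc A (D j)))) R"
    then obtain j t where t: "j \<in> I" "t \<in> snd A R" "set t \<subseteq> D j" "u = map (h j) t" by auto
    then have "u = map \<theta> t" using map_eq[of j t] by simp
    then show "u \<in> snd (map_struc \<theta> A) R" using t(2) by simp
  qed
qed

lemma slot_partition_map:
  assumes disjoint: "\<And>j l. j \<in> I \<Longrightarrow> l \<in> I \<Longrightarrow> j \<noteq> l \<Longrightarrow> D j \<inter> D l = {}"
  obtains \<theta> where "inj_on \<theta> (\<Union>j\<in>I. D j)" "\<And>j z. j \<in> I \<Longrightarrow> z \<in> D j \<Longrightarrow> \<theta> z = slot i j (r j) z"
proof
  define part where "part z = (SOME j. j \<in> I \<and> z \<in> D j)" for z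
  have part: "part z = j" if "j \<in> I" "z \<in> D j" for j z
    unfolding part_def using that disjoint by (rule_tac some_equality) blast+
  define \<theta> where "\<theta> z = slot i (part z) (r (part z)) z" for z
  show \<theta>: "\<theta> z = slot i j (r j) z" if "j \<in> I" "z \<in> D j" for j z
    using part[OF that] by (simp add: \<theta>_def)
  show "inj_on \<theta> (\<Union>j\<in>I. D j)"
  proof (rule inj_onI, elim UN_E)
    fix z z' j l assume z: "j \<in> I" "z \<in> D j" and z': "l \<in> I" "z' \<in> D l" and eq: "\<theta> z = \<theta> z'"
    then have "slot i j (r j) z = slot i l (r l) z'" using \<theta> by simp
    moreover from this have "j = l" by (rule slot_eq_slot_imp)
    ultimately show "z = z'" using inj_slot by (auto dest: injD)
  qed
qed

lemma assemble_partition: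
  assumes A: "closed_struc A" and cover: "fst A = (\<Union>j<n. D j)"
    and disjoint: "\<And>j l. j < n \<Longrightarrow> l < n \<Longrightarrow> j \<noteq> l \<Longrightarrow> D j \<inter> D l = {}"
    and tuples: "\<And>R t. t \<in> snd A R \<Longrightarrow> \<exists>j<n. set t \<subseteq> D j"
    and roots: "\<And>j. j < n \<Longrightarrow> r j \<in> D j"
  obtains \<theta> where "inj_on \<theta> (fst A)" "\<And>j. j < n \<Longrightarrow> \<theta> (r j) = port i j"
    "map_struc \<theta> A = Union_struc {..<n} (\<lambda>j. place i j (restrict_struc A (D j), r j))"
proof -
  obtain \<theta> where inj: "inj_on \<theta> (\<Union>j<n. D j)" and \<theta>: "\<And>j z. j < n \<Longrightarrow> z \<in> D j \<Longrightarrow> \<theta> z = slot i j (r j) z"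
    using slot_partition_map[of "{..<n}" D] disjoint by (metis lessThan_iff)
  show ?thesis
  proof
    show "inj_on \<theta> (fst A)" using inj cover by simp
    show "\<theta> (r j) = port i j" if "j < n" for j using \<theta>[OF that roots[OF that]] by simp
    show "map_struc \<theta> A = Union_struc {..<n} (\<lambda>j. place i j (restrict_struc A (D j), r j))"
      unfolding place_def fst_conv snd_conv
      by (rule map_struc_partition[OF A cover]) (auto simp: \<theta> dest!: tuples)
  qed
qed

lemma is_forest_closed_struc: "is_forest ar A \<Longrightarrow> closed_struc A"
  unfolding is_forest_def using is_struc_closed_struc by blast

lemma delete_tuple_components:
  assumes A: "is_forest ar A" and t: "t \<in> snd A R" "t \<noteq> []"
  obtains D where "fst A = (\<Union>j<length t. D j)"
    "\<And>j l. j < length t \<Longrightarrow> l < length t \<Longrightarrow> j \<noteq> l \<Longrightarrow> D j \<inter> D l = {}"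
    "\<And>S u. u \<in> snd (delete_tuple A R t) S \<Longrightarrow> \<exists>j<length t. set u \<subseteq> D j"
    "\<And>j. j < length t \<Longrightarrow> t ! j \<in> D j"
proof
  let ?A' = "delete_tuple A R t" and ?k = "length t"
  define C where "C j = (adjacent ?A')\<^sup>* `` {t ! j}" for j
  \<comment> \<open>position \<open>0\<close> also takes everything not connected to the block\<close>
  define D where "D j = (if j = 0 then fst A - (\<Union>l\<in>{1..<?k}. C l) else C j)" for j
  have closed: "closed_struc ?A'"
    using is_forest_delete_tuple[OF A] by (rule is_forest_closed_struc)
  have tA: "set t \<subseteq> fst A" using A t(1) by (auto simp: is_forest_def is_struc_def)
  have tC: "t ! j \<in> C j" for j by (simp add: C_def)
  have CA: "C j \<subseteq> fst A" if "j < ?k" for j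
    using adjacent_rtrancl_Image_subset[OF closed] tA that by (simp add: C_def subsetD)
  note disj = forest_delete_tuple_components_disjoint[OF A t(1), folded C_def]
  show "fst A = (\<Union>j<?k. D j)"
    using CA t(2) by (auto simp: D_def)
  show "D j \<inter> D l = {}" if "j < ?k" "l < ?k" "j \<noteq> l" for j l
    using disj[OF that] that by (auto simp: D_def)
  show "\<exists>j<?k. set u \<subseteq> D j" if u: "u \<in> snd ?A' S" for S u
  proof (cases "\<exists>l\<in>{1..<?k}. set u \<inter> C l \<noteq> {}")
    case True
    then obtain l x where "l \<in> {1..<?k}" "x \<in> set u" "x \<in> C l" by blast
    then show ?thesis
      using tuple_subset_adjacent_rtrancl_Image[OF u, of x] by (auto simp: C_def D_def intro!: exI[of _ l])
  next
    case False
    moreover have "set u \<subseteq> fst A"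
      using u closed unfolding closed_struc_def fst_delete_tuple by blast
    ultimately have "set u \<subseteq> D 0" by (auto simp: D_def)
    then show ?thesis using t(2) by blast
  qed
  show "t ! j \<in> D j" if "j < ?k" for j
  proof (cases "j = 0")
    case True
    have "t ! 0 \<notin> C l" if "l \<in> {1..<?k}" for l
      using disj[of 0 l] tC[of 0] that t(2) by auto
    then show ?thesis using True tA t(2) by (auto simp: D_def)
  qed (simp add: D_def tC)
qed

lemma blocks_restrict_struc: "blocks (restrict_struc A K) \<subseteq> blocks A"
  by (rule blocks_mono) auto

lemma rooted_forest_restrict_struc_smaller:
  fixes A :: "'r::finite struc"
  assumes A: "is_forest ar A" and K: "K \<subseteq> fst A" "K \<noteq> fst A" and r: "r \<in> K"
  shows "rooted_forest ar (restrict_struc A K) r \<and> size_struc (restrict_struc A K) < size_struc A"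
proof
  show "rooted_forest ar (restrict_struc A K) r"
    using is_forest_restrict_struc[OF A K(1)] r by (simp add: rooted_forest_def)
  show "size_struc (restrict_struc A K) < size_struc A"
    using A K blocks_restrict_struc[of A K] by (intro size_struc_less) (auto simp: is_forest_def)
qed

lemma rooted_forest_restrict_delete_tuple_smaller:
  fixes A :: "'r::finite struc"
  assumes A: "is_forest ar A" and t: "t \<in> snd A R" and K: "K \<subseteq> fst A" and r: "r \<in> K"
  shows "rooted_forest ar (restrict_struc (delete_tuple A R t) K) r
    \<and> size_struc (restrict_struc (delete_tuple A R t) K) < size_struc A"
proof
  show "rooted_forest ar (restrict_struc (delete_tuple A R t) K) r"
    using is_forest_restrict_struc[OF is_forest_delete_tuple[OF A], of K] K r
    by (simp add: rooted_forest_def)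
  have "blocks (restrict_struc (delete_tuple A R t) K) \<subseteq> blocks A - {(R, t)}"
    using blocks_restrict_struc[of "delete_tuple A R t" K] by (simp add: blocks_delete_tuple)
  moreover have "(R, t) \<in> blocks A" using t by (simp add: blocks_def)
  ultimately show "size_struc (restrict_struc (delete_tuple A R t) K) < size_struc A"
    using A K by (intro size_struc_less) (auto simp: is_forest_def)
qed

lemma splits_as_assembly_lone_root:
  assumes A: "rooted_forest ar A a" and lone: "fst A = {a}"
    and free: "\<And>R t. t \<in> snd A R \<Longrightarrow> a \<notin> set t"
  shows "splits_as_assembly ar A a"
proof -
  let ?N = "{R. [] \<in> snd A R}"
  have S: "is_struc ar A" using A by (rule rooted_forest_is_struc)
  have nullary: "t = []" if "t \<in> snd A R" for R t
  proof -
    have "set t \<subseteq> {a}" using S that lone by (auto simp: is_struc_def)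
    then have "set t = {}" using free[OF that] by (metis subset_singletonD singletonI)
    then show ?thesis by simp
  qed
  have "map_struc (\<lambda>_. 0) A = assemble (nullary_struc {0} ?N) 0 {..<0} Bs" for Bs
  proof (rule struc_eqI)
    fix R
    have "snd A R = {} \<or> snd A R = {[]}" using nullary by blast
    then show "snd (map_struc (\<lambda>_. 0) A) R = snd (assemble (nullary_struc {0} ?N) 0 {..<0} Bs) R"
      by (auto simp: assemble_def)
  qed (simp add: lone assemble_def)
  moreover have "\<forall>R\<in>?N. ar R = 0" using S by (force simp: is_struc_def)
  then have "(nullary_struc {0} ?N, 0, 0) \<in> skeletons ar"
    unfolding skeletons_def by blast
  ultimately show ?thesis
    unfolding splits_as_assembly_def using lone by (intro exI) auto
qed

lemma splits_as_assembly_isolated_root: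
  fixes A :: "'r::finite struc"
  assumes A: "rooted_forest ar A a" and g: "g \<in> fst A" "g \<noteq> a"
    and free: "\<And>R t. t \<in> snd A R \<Longrightarrow> a \<notin> set t"
  shows "splits_as_assembly ar A a"
proof -
  define D where "D j = (if j = 0 then {a} else fst A - {a})" for j :: nat
  define r where "r j = (if j = 0 then a else g)" for j :: nat
  define Bs where "Bs j = (restrict_struc A (D j), r j)" for j
  have F: "is_forest ar A" and a: "a \<in> fst A" using A by (simp_all add: rooted_forest_def)
  have S: "is_struc ar A" using F by (simp add: is_forest_def)
  have closed: "closed_struc A" using S by (rule is_struc_closed_struc)
  obtain \<theta> where inj: "inj_on \<theta> (fst A)" and root: "\<And>j. j < 2 \<Longrightarrow> \<theta> (r j) = port 0 j"
    and map: "map_struc \<theta> A = Union_struc {..<2} (\<lambda>j. place 0 j (Bs j))"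
  proof (rule assemble_partition[OF closed, where n = 2 and D = D and r = r and i = 0])
    have "{..<2::nat} = {0, 1}" by auto
    then show "fst A = (\<Union>j<2. D j)" using a by (auto simp: D_def)
    show "\<exists>j<2. set t \<subseteq> D j" if "t \<in> snd A R" for R t
      using that free[OF that] closed by (auto simp: closed_struc_def D_def intro!: exI[of _ 1])
  qed (auto simp: D_def r_def Bs_def g)
  have "map_struc \<theta> A = assemble (nullary_struc {} {}) 0 {..<2} Bs"
    unfolding map by (rule struc_eqI) (simp_all add: assemble_def)
  moreover have "rooted_pair ar (Bs j) \<and> size_struc (fst (Bs j)) < size_struc A" if "j < 2" for j
    using rooted_forest_restrict_struc_smaller[OF F, of "{a}" a]
      rooted_forest_restrict_struc_smaller[OF F, of "fst A - {a}" g] a g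
    by (auto simp: Bs_def D_def r_def)
  moreover have "(nullary_struc {} {}, 0, 2) \<in> skeletons ar" by (simp add: skeletons_def)
  moreover have "\<theta> a = 0" using root[of 0] by (simp add: r_def port_def)
  ultimately show ?thesis
    unfolding splits_as_assembly_def using inj by blast
qed

lemma splits_as_assembly_block_root:
  fixes A :: "'r::finite struc"
  assumes A: "rooted_forest ar A a" and t: "t \<in> snd A R" "a \<in> set t"
  shows "splits_as_assembly ar A a"
proof -
  let ?A' = "delete_tuple A R t"
  obtain i where i: "i < length t" "t ! i = a" using t(2) by (auto simp: in_set_conv_nth)
  have F: "is_forest ar A" using A by (simp add: rooted_forest_def)
  have S: "is_struc ar A" using F by (simp add: is_forest_def)
  have len: "length t = ar R" and tA: "set t \<subseteq> fst A" using S t(1) by (auto simp: is_struc_def)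
  have closed': "closed_struc ?A'" using is_forest_delete_tuple[OF F] by (rule is_forest_closed_struc)
  have ne: "t \<noteq> []" using t(2) by auto
  obtain D where cover: "fst A = (\<Union>j<length t. D j)"
    and disj: "\<And>j l. j < length t \<Longrightarrow> l < length t \<Longrightarrow> j \<noteq> l \<Longrightarrow> D j \<inter> D l = {}"
    and tuples: "\<And>S u. u \<in> snd ?A' S \<Longrightarrow> \<exists>j<length t. set u \<subseteq> D j"
    and roots: "\<And>j. j < length t \<Longrightarrow> t ! j \<in> D j"
    by (rule delete_tuple_components[OF F t(1) ne]) (rule that)
  define Bs where "Bs j = (restrict_struc ?A' (D j), t ! j)" for j
  obtain \<theta> where inj: "inj_on \<theta> (fst ?A')" and root: "\<And>j. j < length t \<Longrightarrow> \<theta> (t ! j) = port i j"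
    and map: "map_struc \<theta> ?A' = Union_struc {..<length t} (\<lambda>j. place i j (Bs j))"
    unfolding Bs_def
    by (rule assemble_partition[where i = i, OF closed' _ disj tuples roots]) (simp_all add: cover)
  have "map \<theta> t = map (port i) [0..<ar R]"
    using root len by (intro nth_equalityI) auto
  then have "map_struc \<theta> A = assemble (tuple_struc R (map (port i) [0..<ar R])) i {..<ar R} Bs"
    using arg_cong[OF union_tuple_delete_tuple[OF t(1) tA], of "map_struc \<theta>"]
    by (simp add: map_struc_union_struc map_struc_tuple_struc assemble_def map len)
  moreover have "rooted_pair ar (Bs j) \<and> size_struc (fst (Bs j)) < size_struc A" if "j < ar R" for j
    using rooted_forest_restrict_delete_tuple_smaller[OF F t(1)] cover roots[of j] that len
    by (auto simp: Bs_def)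
  moreover have "(tuple_struc R (map (port i) [0..<ar R]), i, ar R) \<in> skeletons ar"
    using i len by (auto simp: skeletons_def)
  moreover have "\<theta> a = 0" using root[OF i(1)] i(2) by (simp add: port_def)
  ultimately show ?thesis
    unfolding splits_as_assembly_def using inj by (metis fst_delete_tuple)
qed

lemma rooted_forest_splits_as_assembly:
  fixes A :: "'r::finite struc"
  assumes A: "rooted_forest ar A a"
  shows "splits_as_assembly ar A a"
proof (cases "\<exists>R t. t \<in> snd A R \<and> a \<in> set t")
  case True
  then show ?thesis using splits_as_assembly_block_root[OF A] by blast
next
  case False
  then have free: "\<And>R t. t \<in> snd A R \<Longrightarrow> a \<notin> set t" by blast
  show ?thesis
  proof (cases "fst A = {a}")
    case True
    then show ?thesis using splits_as_assembly_lone_root[OF A True] free by blast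
  next
    case False
    then obtain g where "g \<in> fst A" "g \<noteq> a" using rooted_forest_root[OF A] by blast
    then show ?thesis using splits_as_assembly_isolated_root[OF A] free by blast
  qed
qed

section \<open>Recognizers\<close>

definition residual_classes :: "('r \<Rightarrow> nat) \<Rightarrow> 'r struc set \<Rightarrow> ('r struc \<times> nat) set set" where
  "residual_classes ar F = (\<lambda>(A, a). residual ar F A a) ` {(A, a). rooted_forest ar A a}"

definition label :: "('r \<Rightarrow> nat) \<Rightarrow> 'r struc set \<Rightarrow> 'r struc \<times> nat \<Rightarrow> nat" where
  "label ar F B = to_nat_on (residual_classes ar F) (residual ar F (fst B) (snd B))"

definition assembly_inputs :: "('r \<Rightarrow> nat) \<Rightarrow> ('r struc \<times> nat \<times> nat \<times> (nat \<Rightarrow> 'r struc \<times> nat)) set" where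
  "assembly_inputs ar = {(W, i, n, Bs). (W, i, n) \<in> skeletons ar \<and> (\<forall>j<n. rooted_pair ar (Bs j))}"

definition assembly_key ::
  "('r \<Rightarrow> nat) \<Rightarrow> 'r struc set \<Rightarrow> 'r struc \<times> nat \<times> nat \<times> (nat \<Rightarrow> 'r struc \<times> nat) \<Rightarrow> 'r struc \<times> nat \<times> nat list" where
  "assembly_key ar F = (\<lambda>(W, i, n, Bs). (W, i, map (\<lambda>j. label ar F (Bs j)) [0..<n]))"

definition assembly_value ::
  "('r \<Rightarrow> nat) \<Rightarrow> 'r struc set \<Rightarrow> 'r struc \<times> nat \<times> nat \<times> (nat \<Rightarrow> 'r struc \<times> nat) \<Rightarrow> nat" where
  "assembly_value ar F = (\<lambda>(W, i, n, Bs). label ar F (assemble W i {..<n} Bs, 0))"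

definition assembly_table :: "('r \<Rightarrow> nat) \<Rightarrow> 'r struc set \<Rightarrow> (('r struc \<times> nat \<times> nat list) \<times> nat) set" where
  "assembly_table ar F = (\<lambda>x. (assembly_key ar F x, assembly_value ar F x)) ` assembly_inputs ar"

definition accepted_labels :: "('r \<Rightarrow> nat) \<Rightarrow> 'r struc set \<Rightarrow> nat set" where
  "accepted_labels ar F = {label ar F (A, a) | A a. rooted_forest ar A a \<and> A \<in> F}"

definition recognizer ::
  "('r \<Rightarrow> nat) \<Rightarrow> 'r struc set \<Rightarrow> (('r struc \<times> nat \<times> nat list) \<times> nat) set \<times> nat set \<times> 'r set set" where
  "recognizer ar F = (assembly_table ar F, accepted_labels ar F, {N. nullary_struc {} N \<in> F})"

lemma image_pair_eq_imp_eq: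
  assumes "(\<lambda>x. (k1 x, v1 x)) ` X = (\<lambda>x. (k2 x, v2 x)) ` X"
    and "\<And>x y. x \<in> X \<Longrightarrow> y \<in> X \<Longrightarrow> k2 x = k2 y \<Longrightarrow> v2 x = v2 y"
    and "x \<in> X" and "k1 x = k2 x"
  shows "v1 x = v2 x"
proof -
  have "(k1 x, v1 x) \<in> (\<lambda>x. (k2 x, v2 x)) ` X"
    unfolding assms(1)[symmetric] using assms(3) by (rule imageI)
  then obtain y where "y \<in> X" "k1 x = k2 y" "v1 x = v2 y" by auto
  then show ?thesis using assms(2)[of x y] assms(3,4) by simp
qed

lemma finite_image_pair:
  assumes "finite (k ` X)" and "\<And>x y. x \<in> X \<Longrightarrow> y \<in> X \<Longrightarrow> k x = k y \<Longrightarrow> v x = v y"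
  shows "finite ((\<lambda>x. (k x, v x)) ` X)"
proof (rule finite_imageD)
  show "finite (fst ` (\<lambda>x. (k x, v x)) ` X)" using assms(1) by (simp add: image_image)
  show "inj_on fst ((\<lambda>x. (k x, v x)) ` X)"
  proof (rule inj_onI)
    fix p q assume "p \<in> (\<lambda>x. (k x, v x)) ` X" "q \<in> (\<lambda>x. (k x, v x)) ` X" "fst p = fst q"
    then obtain x y where "x \<in> X" "y \<in> X" "p = (k x, v x)" "q = (k y, v y)" "k x = k y" by auto
    then show "p = q" using assms(2)[of x y] by simp
  qed
qed

lemma nullary_struc_empty_universe:
  assumes "is_struc ar A" "fst A = {}"
  shows "A = nullary_struc {} {R. [] \<in> snd A R}"
proof (rule struc_eqI)
  fix R
  have "snd A R \<subseteq> {[]}" using assms by (auto simp: is_struc_def)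
  then have "snd A R = {} \<or> snd A R = {[]}" by blast
  then show "snd A R = snd (nullary_struc {} {R. [] \<in> snd A R}) R" by auto
qed (simp add: assms(2))

locale regular_forest_fam = forest_fam ar F for ar :: "'r::finite \<Rightarrow> nat" and F +
  assumes regular: "regular_family ar F"
begin

lemma finite_residual_classes: "finite (residual_classes ar F)"
  using regular by (simp add: regular_family_def residual_classes_def)

lemma label_eq_iff:
  assumes "rooted_pair ar B" "rooted_pair ar C"
  shows "label ar F B = label ar F C \<longleftrightarrow> res_pair B = res_pair C"
proof -
  have "inj_on (to_nat_on (residual_classes ar F)) (residual_classes ar F)"
    using finite_residual_classes by (simp add: inj_on_to_nat_on countable_finite)
  moreover have "res_pair B \<in> residual_classes ar F" "res_pair C \<in> residual_classes ar F"
    using assms by (force simp: residual_classes_def)+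
  ultimately show ?thesis by (auto simp: label_def dest: inj_onD)
qed

lemma finite_labels: "finite (label ar F ` {B. rooted_pair ar B})"
proof (rule finite_subset)
  show "label ar F ` {B. rooted_pair ar B} \<subseteq> to_nat_on (residual_classes ar F) ` residual_classes ar F"
    by (force simp: label_def residual_classes_def)
qed (simp add: finite_residual_classes)

lemma label_map_struc:
  assumes "rooted_forest ar A a" "inj_on \<theta> (fst A)"
  shows "label ar F (map_struc \<theta> A, \<theta> a) = label ar F (A, a)"
  using residual_map_struc[OF rooted_forest_closed_struc rooted_forest_root] assms
  by (simp add: label_def)

lemma assembly_value_cong:
  assumes x: "x \<in> assembly_inputs ar" and y: "y \<in> assembly_inputs ar"
    and key: "assembly_key ar F x = assembly_key ar F y"
  shows "assembly_value ar F x = assembly_value ar F y"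
proof -
  obtain W i n Bs W' i' n' Bs' where xy: "x = (W, i, n, Bs)" "y = (W', i', n', Bs')"
    by (metis prod_cases4)
  have W: "(W, i, n) \<in> skeletons ar" and Bs: "\<And>j. j < n \<Longrightarrow> rooted_pair ar (Bs j)"
    and Bs': "\<And>j. j < n' \<Longrightarrow> rooted_pair ar (Bs' j)"
    using x y by (auto simp: xy assembly_inputs_def)
  have eq: "W' = W" "i' = i" "map (\<lambda>j. label ar F (Bs j)) [0..<n] = map (\<lambda>j. label ar F (Bs' j)) [0..<n']"
    using key by (simp_all add: xy assembly_key_def)
  then have n: "n' = n" by (metis length_map length_upt minus_nat.diff_0)
  have "res_pair (Bs j) = res_pair (Bs' j)" if "j < n" for j
  proof -
    have "label ar F (Bs j) = label ar F (Bs' j)" using eq(3) that by (simp add: n map_eq_conv)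
    then show ?thesis using label_eq_iff Bs[OF that] Bs'[of j] that n by simp
  qed
  then have "res (assemble W i {..<n} Bs) 0 = res (assemble W i {..<n} Bs') 0"
    using skeletonsD[OF W] Bs Bs' n by (intro residual_assemble_cong) auto
  then show ?thesis by (simp add: xy eq n assembly_value_def label_def)
qed

lemma finite_assembly_table: "finite (assembly_table ar F)"
  unfolding assembly_table_def
proof (rule finite_image_pair[OF finite_subset assembly_value_cong])
  let ?L = "label ar F ` {B. rooted_pair ar B}"
  show "assembly_key ar F ` assembly_inputs ar \<subseteq>
      (\<Union>(W, i, n)\<in>skeletons ar. {W} \<times> {i} \<times> {ls. set ls \<subseteq> ?L \<and> length ls = n})"
  proof
    fix k assume "k \<in> assembly_key ar F ` assembly_inputs ar"
    then obtain W i n Bs where W: "(W, i, n) \<in> skeletons ar" and Bs: "\<forall>j<n. rooted_pair ar (Bs j)"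
      and k: "k = (W, i, map (\<lambda>j. label ar F (Bs j)) [0..<n])"
      by (auto simp: assembly_inputs_def assembly_key_def)
    have "set (map (\<lambda>j. label ar F (Bs j)) [0..<n]) \<subseteq> ?L" using Bs by auto
    then show "k \<in> (\<Union>(W, i, n)\<in>skeletons ar. {W} \<times> {i} \<times> {ls. set ls \<subseteq> ?L \<and> length ls = n})"
      using W k by force
  qed
  show "finite (\<Union>(W, i, n)\<in>skeletons ar. {W} \<times> {i} \<times> {ls. set ls \<subseteq> ?L \<and> length ls = n})"
  proof (rule finite_UN_I[OF finite_skeletons], clarify)
    fix W i n
    show "finite ({W} \<times> {i} \<times> {ls. set ls \<subseteq> ?L \<and> length ls = n})"
      using finite_labels by (simp add: finite_lists_length_eq)
  qed
qed

lemma finite_accepted_labels: "finite (accepted_labels ar F)"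
  by (rule finite_subset[OF _ finite_labels]) (force simp: accepted_labels_def)

lemma mem_iff_accepted:
  assumes A: "rooted_forest ar A a"
  shows "A \<in> F \<longleftrightarrow> label ar F (A, a) \<in> accepted_labels ar F"
proof
  assume "label ar F (A, a) \<in> accepted_labels ar F"
  then obtain A' a' where A': "rooted_forest ar A' a'" "A' \<in> F" "label ar F (A, a) = label ar F (A', a')"
    by (auto simp: accepted_labels_def)
  then have "res A a = res A' a'" using label_eq_iff[of "(A, a)" "(A', a')"] A by simp
  then show "A \<in> F" using mem_iff_point_residual[OF A] mem_iff_point_residual[OF A'(1)] A'(2) by simp
qed (use A in \<open>unfold accepted_labels_def, blast\<close>)

end

lemma assembly_table_eq_imp_label_eq:
  assumes F1: "regular_forest_fam ar F1" and F2: "regular_forest_fam ar F2"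
    and table: "assembly_table ar F1 = assembly_table ar F2"
    and A: "rooted_forest ar A a"
  shows "label ar F1 (A, a) = label ar F2 (A, a)"
  using A
proof (induction "size_struc A" arbitrary: A a rule: less_induct)
  case less
  obtain W i n Bs \<theta> where W: "(W, i, n) \<in> skeletons ar"
    and Bs: "\<And>j. j < n \<Longrightarrow> rooted_pair ar (Bs j) \<and> size_struc (fst (Bs j)) < size_struc A"
    and \<theta>: "inj_on \<theta> (fst A)" "\<theta> a = 0" and split: "map_struc \<theta> A = assemble W i {..<n} Bs"
    using rooted_forest_splits_as_assembly[OF less.prems] unfolding splits_as_assembly_def by blast
  let ?x = "(W, i, n, Bs)"
  have x: "?x \<in> assembly_inputs ar" using W Bs by (simp add: assembly_inputs_def)
  have "label ar F1 (Bs j) = label ar F2 (Bs j)" if "j < n" for j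
    using less.hyps[of "fst (Bs j)" "snd (Bs j)"] Bs[OF that] by simp
  then have "assembly_key ar F1 ?x = assembly_key ar F2 ?x" by (simp add: assembly_key_def)
  then have "assembly_value ar F1 ?x = assembly_value ar F2 ?x"
    using image_pair_eq_imp_eq[OF table[unfolded assembly_table_def] regular_forest_fam.assembly_value_cong[OF F2] x]
    by blast
  moreover have "label ar F (A, a) = assembly_value ar F ?x" if "regular_forest_fam ar F" for F
    using regular_forest_fam.label_map_struc[OF that less.prems \<theta>(1)] \<theta>(2) split
    by (simp add: assembly_value_def)
  ultimately show ?case using F1 F2 by simp
qed

lemma recognizer_eq_imp_subset:
  assumes F1: "regular_forest_fam ar F1" and F2: "regular_forest_fam ar F2"
    and eq: "recognizer ar F1 = recognizer ar F2"
  shows "F1 \<subseteq> F2"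
proof
  fix X assume X: "X \<in> F1"
  have forest: "is_forest ar X"
    using F1 X by (intro forest_fam.mem_is_forest) (simp_all add: regular_forest_fam_def)
  show "X \<in> F2"
  proof (cases "fst X = {}")
    case True
    then have XN: "X = nullary_struc {} {R. [] \<in> snd X R}"
      using forest by (intro nullary_struc_empty_universe[of ar]) (simp_all add: is_forest_def)
    have "{N. nullary_struc {} N \<in> F1} = {N. nullary_struc {} N \<in> F2}"
      using eq by (simp add: recognizer_def)
    moreover have "{R. [] \<in> snd X R} \<in> {N. nullary_struc {} N \<in> F1}" using X XN by simp
    ultimately show ?thesis using XN by simp
  next
    case False
    then obtain a where A: "rooted_forest ar X a" using forest by (auto simp: rooted_forest_def)
    have "label ar F1 (X, a) \<in> accepted_labels ar F2"
      using X eq regular_forest_fam.mem_iff_accepted[OF F1 A] by (simp add: recognizer_def)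
    then show ?thesis
      using regular_forest_fam.mem_iff_accepted[OF F2 A]
        assembly_table_eq_imp_label_eq[OF F1 F2 _ A] eq by (simp add: recognizer_def)
  qed
qed

definition assembly_keys :: "('r \<Rightarrow> nat) \<Rightarrow> ('r struc \<times> nat \<times> nat list) set" where
  "assembly_keys ar = {(W, i, ls). (W, i, length ls) \<in> skeletons ar}"

definition recognizer_space ::
  "('r \<Rightarrow> nat) \<Rightarrow> ((('r struc \<times> nat \<times> nat list) \<times> nat) set \<times> nat set \<times> 'r set set) set" where
  "recognizer_space ar = {T. finite T \<and> T \<subseteq> assembly_keys ar \<times> UNIV} \<times> Collect finite \<times> UNIV"

lemma countable_recognizer_space: "countable (recognizer_space (ar :: 'r::finite \<Rightarrow> nat))"
proof -
  have "assembly_keys ar \<subseteq> (\<lambda>((W, i, n), ls). (W, i, ls)) ` (skeletons ar \<times> UNIV)"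
  proof
    fix k assume "k \<in> assembly_keys ar"
    then obtain W i ls where "k = (W, i, ls)" "(W, i, length ls) \<in> skeletons ar"
      by (auto simp: assembly_keys_def)
    then show "k \<in> (\<lambda>((W, i, n), ls). (W, i, ls)) ` (skeletons ar \<times> UNIV)"
      by (auto intro!: image_eqI[of _ _ "((W, i, length ls), ls)"])
  qed
  then have "countable (assembly_keys ar)"
    using finite_skeletons by (meson countable_SIGMA countable_finite countable_image countable_subset UNIV_I countableI_type)
  then show ?thesis
    unfolding recognizer_space_def
    by (intro countable_SIGMA countable_Collect_finite_subset countable_Collect_finite) (auto intro: countable_finite)
qed

lemma (in regular_forest_fam) recognizer_in_space: "recognizer ar F \<in> recognizer_space ar"
proof -
  have "assembly_key ar F x \<in> assembly_keys ar" if "x \<in> assembly_inputs ar" for x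
    using that by (auto simp: assembly_inputs_def assembly_key_def assembly_keys_def)
  then have "assembly_table ar F \<subseteq> assembly_keys ar \<times> UNIV"
    by (auto simp: assembly_table_def)
  then show ?thesis
    using finite_assembly_table finite_accepted_labels by (simp add: recognizer_def recognizer_space_def)
qed

theorem theorem3p6:
  fixes ar :: "'r::finite \<Rightarrow> nat"
  shows "countable {F. forest_family ar F \<and> regular_family ar F}"
proof -
  let ?R = "{F. forest_family ar F \<and> regular_family ar F}"
  have fam: "regular_forest_fam ar F" if "F \<in> ?R" for F
    using that by (simp add: regular_forest_fam_def regular_forest_fam_axioms_def forest_fam_def)
  have "inj_on (recognizer ar) ?R"
  proof (rule inj_onI)
    fix F1 F2 assume F: "F1 \<in> ?R" "F2 \<in> ?R" and eq: "recognizer ar F1 = recognizer ar F2"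
    show "F1 = F2"
      using recognizer_eq_imp_subset[OF fam[OF F(1)] fam[OF F(2)] eq]
        recognizer_eq_imp_subset[OF fam[OF F(2)] fam[OF F(1)] eq[symmetric]]
      by (rule subset_antisym)
  qed
  moreover have "recognizer ar ` ?R \<subseteq> recognizer_space ar"
    using regular_forest_fam.recognizer_in_space[OF fam] by blast
  then have "countable (recognizer ar ` ?R)"
    by (rule countable_subset) (rule countable_recognizer_space)
  ultimately show ?thesis by (rule countable_image_inj_on[rotated])
qed

end
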